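(* Let $h\in\mathbb{R}$ with $h\neq 0$, and let $\{\mathcal{H}_t\colon t\in\mathbb{R}\}$ be the one-parameter group of helicoidal motions of $\mathbb{R}^3$ given by $\mathcal{H}_t(x,y,z)=(x\cos t-y\sin t,\ x\sin t+y\cos t,\ z+ht)$. Let $\vec{v}\in\mathbb{R}^3$ be a unit vector and $\alpha\in\mathbb{R}$ with $\alpha\neq 0$. Let $\Sigma$ be an orientable surface immersed in the half-space $\{p\in\mathbb{R}^3\colon\langle p,\vec{v}\rangle>0\}$ which is invariant by the helicoidal group, i.e. $\mathcal{H}_t(\Sigma)=\Sigma$ for all $t\in\mathbb{R}$. If $\Sigma$ is an $\alpha$-singular minimal surface with respect to $\vec{v}$, i.e. its mean curvature satisfies $H(p)=\alpha\frac{\langle N(p),\vec{v}\rangle}{\langle p,\vec{v}\rangle}$ for all $p\in\Sigma$, then the twist axis (the $z$-axis) is contained in the vector plane $\{p\in\mathbb{R}^3\colon\langle p,\vec{v}\rangle=0\}$ (in particular $\vec{v}$ is orthogonal to the $z$-axis), $\alpha=-1$, and $\Sigma$ is a circular cylinder about the $z$-axis.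
   Context: $\langle\cdot,\cdot\rangle$ is the Euclidean inner product on $\mathbb{R}^3$, $N$ is the unit normal vector of $\Sigma$, and the mean curvature $H$ is defined as the sum of the principal curvatures (computed with respect to $N$). The value $\alpha=0$ is excluded throughout the paper. The helicoidal surface is assumed to be generated by moving a regular planar curve $\gamma(s)=(x(s),0,z(s))$ by the motions $\mathcal{H}_t$, i.e. parametrized by $\Psi(s,t)=(x(s)\cos t,x(s)\sin t,z(s)+ht)$ with $x^2+h^2x'^2>0$. *)

theory Defs
  imports "HOL-Analysis.Analysis" "HOL-Analysis.Cross3"
begin

definition helicoidal_motion :: "real \<Rightarrow> real \<Rightarrow> real^3 \<Rightarrow> real^3" where
  "helicoidal_motion h t p =
     vector [p$1 * cos t - p$2 * sin t, p$1 * sin t + p$2 * cos t, p$3 + h * t]"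

definition helicoidal_surface ::
  "real \<Rightarrow> (real \<Rightarrow> real) \<Rightarrow> (real \<Rightarrow> real) \<Rightarrow> real \<Rightarrow> real \<Rightarrow> real^3" where
  "helicoidal_surface h x z s t = helicoidal_motion h t (vector [x s, 0, z s])"

definition D_s :: "(real \<Rightarrow> real \<Rightarrow> real^3) \<Rightarrow> real \<Rightarrow> real \<Rightarrow> real^3" where
  "D_s P s t = vector_derivative (\<lambda>\<sigma>. P \<sigma> t) (at s)"

definition D_t :: "(real \<Rightarrow> real \<Rightarrow> real^3) \<Rightarrow> real \<Rightarrow> real \<Rightarrow> real^3" where
  "D_t P s t = vector_derivative (\<lambda>\<tau>. P s \<tau>) (at t)"

definition unit_normal :: "(real \<Rightarrow> real \<Rightarrow> real^3) \<Rightarrow> real \<Rightarrow> real \<Rightarrow> real^3" where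
  "unit_normal P s t =
     (let n = cross3 (D_s P s t) (D_t P s t) in (1 / norm n) *\<^sub>R n)"

text \<open>Mean curvature = sum of principal curvatures w.r.t. N:
  H = (E n - 2 F m + G l) / (E G - F^2), with l, m, n the coefficients of the
  second fundamental form with respect to N.\<close>
definition mean_curvature :: "(real \<Rightarrow> real \<Rightarrow> real^3) \<Rightarrow> real \<Rightarrow> real \<Rightarrow> real" where
  "mean_curvature P s t =
     (let Ps = D_s P s t; Pt = D_t P s t;
          Pss = D_s (D_s P) s t; Pst = D_t (D_s P) s t; Ptt = D_t (D_t P) s t;
          N = unit_normal P s t;
          E = Ps \<bullet> Ps; F = Ps \<bullet> Pt; G = Pt \<bullet> Pt;
          l = Pss \<bullet> N; m = Pst \<bullet> N; n = Ptt \<bullet> N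
      in (E * n - 2 * F * m + G * l) / (E * G - F\<^sup>2))"

end

theory Submission
  imports Defs
begin

text \<open>
  On a helicoidal surface \<open>\<Psi>(s,t) = (x cos t, x sin t, z + h t)\<close> the mean curvature \<open>H\<close> and
  the length of \<open>\<Psi>\<^sub>s \<times> \<Psi>\<^sub>t\<close> depend only on \<open>s\<close>, while \<open>\<langle>\<Psi>, v\<rangle>\<close> and
  \<open>\<langle>\<Psi>\<^sub>s \<times> \<Psi>\<^sub>t, v\<rangle>\<close> are combinations of \<open>1, t, cos t, sin t\<close>. Clearing denominators in the
  singular minimal equation and using the linear independence of these four functions gives four
  equations for every profile point. The coefficient of \<open>t\<close> forces \<open>H v\<^sub>3 = 0\<close>. If \<open>v\<^sub>3 \<noteq> 0\<close>, then
  \<open>H = 0\<close> and the constant coefficient gives \<open>x x' = 0\<close>, so \<open>x\<close> is constant and the surface is a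
  circular cylinder, whose mean curvature does not vanish. Hence \<open>v\<close> is horizontal, and the
  \<open>cos\<close>/\<open>sin\<close> coefficients give \<open>\<alpha> h x' = 0\<close> and \<open>(1 + \<alpha>) x z' = 0\<close> on that cylinder.
\<close>

lemma has_vector_derivative_vector3:
  assumes "(f1 has_real_derivative a1) (at u)" "(f2 has_real_derivative a2) (at u)"
    and "(f3 has_real_derivative a3) (at u)"
  shows "((\<lambda>w. vector [f1 w, f2 w, f3 w] :: real^3) has_vector_derivative vector [a1, a2, a3]) (at u)"
proof -
  have vector3_eq: "(vector [a, b, c] :: real^3) = a *\<^sub>R axis 1 1 + b *\<^sub>R axis 2 1 + c *\<^sub>R axis 3 1"
    for a b c
    by (simp add: vec_eq_iff forall_3 axis_def)
  show ?thesis
    unfolding vector3_eq using assms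
    by (intro has_vector_derivative_add
        has_vector_derivative_scaleR[OF _ has_vector_derivative_const, simplified])
qed

lemma DERIV_zero_if_constant_on_open:
  fixes f :: "real \<Rightarrow> real"
  assumes "(f has_real_derivative f') (at t)" "open J" "t \<in> J" "\<And>u. u \<in> J \<Longrightarrow> f u = c"
  shows "f' = 0"
proof -
  have "(f has_real_derivative 0) (at t)"
    by (rule has_field_derivative_transform_within_open[OF DERIV_const assms(2,3)])
      (use assms(4) in auto)
  with assms(1) show ?thesis
    using DERIV_unique by blast
qed

lemma DERIV_zero_if_self_times_DERIV_zero:
  fixes f f' :: "real \<Rightarrow> real"
  assumes I: "open I" "is_interval I"
    and df: "\<And>s. s \<in> I \<Longrightarrow> (f has_real_derivative f' s) (at s)"
    and prod: "\<And>s. s \<in> I \<Longrightarrow> f s * f' s = 0"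
    and s: "s \<in> I"
  shows "f' s = 0"
proof -
  have "\<exists>k. \<forall>u\<in>I. (f u)\<^sup>2 = k"
  proof (rule has_field_derivative_zero_constant)
    show "convex I"
      using I(2) by (simp add: is_interval_convex)
    fix u assume u: "u \<in> I"
    have "((\<lambda>u. (f u)\<^sup>2) has_real_derivative 2 * (f u * f' u)) (at u)"
      using df[OF u] by (auto intro!: derivative_eq_intros)
    then show "((\<lambda>u. (f u)\<^sup>2) has_real_derivative 0) (at u within I)"
      using prod[OF u] by (auto intro: has_field_derivative_at_within)
  qed
  then obtain k where k: "\<And>u. u \<in> I \<Longrightarrow> (f u)\<^sup>2 = k"
    by blast
  show ?thesis
  proof (cases "f s = 0")
    case True
    then have "\<And>u. u \<in> I \<Longrightarrow> f u = 0"
      using k k[OF s] by simp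
    then show ?thesis
      using DERIV_zero_if_constant_on_open[OF df[OF s] I(1) s] by blast
  next
    case False
    then show ?thesis
      using prod[OF s] by simp
  qed
qed

lemma affine_cos_sin_zero_on_open_imp_coeffs_zero:
  fixes A B C D :: real
  assumes J: "open J" "J \<noteq> {}"
    and zero: "\<And>t. t \<in> J \<Longrightarrow> A + B * t + C * cos t + D * sin t = 0"
  shows "A = 0 \<and> B = 0 \<and> C = 0 \<and> D = 0"
proof -
  have d1: "B - C * sin t + D * cos t = 0" if "t \<in> J" for t
    by (rule DERIV_zero_if_constant_on_open[OF _ J(1) that zero])
      (auto intro!: derivative_eq_intros)
  have d2: "- C * cos t - D * sin t = 0" if "t \<in> J" for t
    by (rule DERIV_zero_if_constant_on_open[OF _ J(1) that d1])
      (auto intro!: derivative_eq_intros)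
  have d3: "C * sin t - D * cos t = 0" if "t \<in> J" for t
    by (rule DERIV_zero_if_constant_on_open[OF _ J(1) that d2])
      (auto intro!: derivative_eq_intros)
  obtain t where t: "t \<in> J"
    using J(2) by blast
  have B: "B = 0"
    using d1[OF t] d3[OF t] by simp
  have "C = - cos t * (- C * cos t - D * sin t) + sin t * (C * sin t - D * cos t)"
    using sin_cos_squared_add[of t] by algebra
  then have C: "C = 0"
    by (simp only: d2[OF t] d3[OF t])
  have "D = - sin t * (- C * cos t - D * sin t) - cos t * (C * sin t - D * cos t)"
    using sin_cos_squared_add[of t] by algebra
  then have D: "D = 0"
    by (simp only: d2[OF t] d3[OF t])
  show ?thesis
    using zero[OF t] B C D by simp
qed

lemma helicoidal_surface_eq:
  "helicoidal_surface h x z s t = vector [x s * cos t, x s * sin t, z s + h * t]"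
  by (simp add: helicoidal_surface_def helicoidal_motion_def)

lemma helicoidal_surface_distance_to_axis:
  "(helicoidal_surface h x z s t $ 1)\<^sup>2 + (helicoidal_surface h x z s t $ 2)\<^sup>2 = (x s)\<^sup>2"
  unfolding helicoidal_surface_eq
  by (simp add: power_mult_distrib flip: distrib_left)

lemma D_s_helicoidal_surface:
  assumes "(x has_real_derivative xd) (at s)" "(z has_real_derivative zd) (at s)"
  shows "D_s (helicoidal_surface h x z) s t = vector [xd * cos t, xd * sin t, zd]"
  unfolding D_s_def helicoidal_surface_eq
  by (rule vector_derivative_at, rule has_vector_derivative_vector3)
    (auto intro!: derivative_eq_intros assms)

lemma D_t_helicoidal_surface:
  "D_t (helicoidal_surface h x z) s t = vector [- x s * sin t, x s * cos t, h]"
  unfolding D_t_def helicoidal_surface_eq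
  by (rule vector_derivative_at, rule has_vector_derivative_vector3)
    (auto intro!: derivative_eq_intros)

lemma D_t_D_t_helicoidal_surface:
  "D_t (D_t (helicoidal_surface h x z)) s t = vector [- x s * cos t, - x s * sin t, 0]"
  unfolding D_t_def[of "D_t _"] D_t_helicoidal_surface
  by (rule vector_derivative_at, rule has_vector_derivative_vector3)
    (auto intro!: derivative_eq_intros)

lemma D_t_D_s_helicoidal_surface:
  assumes "(x has_real_derivative xd) (at s)" "(z has_real_derivative zd) (at s)"
  shows "D_t (D_s (helicoidal_surface h x z)) s t = vector [- xd * sin t, xd * cos t, 0]"
  unfolding D_t_def[of "D_s _"] D_s_helicoidal_surface[OF assms]
  by (rule vector_derivative_at, rule has_vector_derivative_vector3)
    (auto intro!: derivative_eq_intros)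

lemma D_s_D_s_helicoidal_surface:
  assumes I: "open I" "s \<in> I"
    and dx: "\<And>s. s \<in> I \<Longrightarrow> (x has_real_derivative x' s) (at s)"
    and dx': "(x' has_real_derivative xdd) (at s)"
    and dz: "\<And>s. s \<in> I \<Longrightarrow> (z has_real_derivative z' s) (at s)"
    and dz': "(z' has_real_derivative zdd) (at s)"
  shows "D_s (D_s (helicoidal_surface h x z)) s t = vector [xdd * cos t, xdd * sin t, zdd]"
  unfolding D_s_def[of "D_s _"]
proof (rule vector_derivative_at)
  have "((\<lambda>\<sigma>. vector [x' \<sigma> * cos t, x' \<sigma> * sin t, z' \<sigma>] :: real^3) has_vector_derivative
      vector [xdd * cos t, xdd * sin t, zdd]) (at s)"
    by (rule has_vector_derivative_vector3) (auto intro!: derivative_eq_intros dx' dz')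
  then show "((\<lambda>\<sigma>. D_s (helicoidal_surface h x z) \<sigma> t) has_vector_derivative
      vector [xdd * cos t, xdd * sin t, zdd]) (at s)"
    by (rule has_vector_derivative_transform_within_open[OF _ I])
      (simp add: D_s_helicoidal_surface[OF dx dz])
qed

locale helicoidal_profile =
  fixes h :: real and x x' x'' z z' z'' :: "real \<Rightarrow> real" and I :: "real set"
  assumes open_I: "open I"
    and dx: "\<And>s. s \<in> I \<Longrightarrow> (x has_real_derivative x' s) (at s)"
    and dx': "\<And>s. s \<in> I \<Longrightarrow> (x' has_real_derivative x'' s) (at s)"
    and dz: "\<And>s. s \<in> I \<Longrightarrow> (z has_real_derivative z' s) (at s)"
    and dz': "\<And>s. s \<in> I \<Longrightarrow> (z' has_real_derivative z'' s) (at s)"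
    and regular: "\<And>s. s \<in> I \<Longrightarrow> (x' s)\<^sup>2 + (z' s)\<^sup>2 > 0"
    and immersed: "\<And>s. s \<in> I \<Longrightarrow> (x s)\<^sup>2 + h\<^sup>2 * (x' s)\<^sup>2 > 0"
begin

abbreviation \<Psi> :: "real \<Rightarrow> real \<Rightarrow> real^3" where
  "\<Psi> \<equiv> helicoidal_surface h x z"

text \<open>\<open>normal s t\<close> is \<open>\<Psi>\<^sub>s \<times> \<Psi>\<^sub>t\<close>, and \<open>gram s = |\<Psi>\<^sub>s \<times> \<Psi>\<^sub>t|\<^sup>2 = EG - F\<^sup>2\<close>.\<close>

definition normal :: "real \<Rightarrow> real \<Rightarrow> real^3" where
  "normal s t = vector [h * x' s * sin t - x s * z' s * cos t,
                        - h * x' s * cos t - x s * z' s * sin t,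
                        x s * x' s]"

definition gram :: "real \<Rightarrow> real" where
  "gram s = (x s * z' s)\<^sup>2 + (h * x' s)\<^sup>2 + (x s * x' s)\<^sup>2"

definition H :: "real \<Rightarrow> real" where
  "H s = (((x' s)\<^sup>2 + (z' s)\<^sup>2) * (x s)\<^sup>2 * z' s + 2 * h\<^sup>2 * (x' s)\<^sup>2 * z' s
          + ((x s)\<^sup>2 + h\<^sup>2) * x s * (x' s * z'' s - x'' s * z' s))
         / (sqrt (gram s) * gram s)"

lemma gram_pos:
  assumes "s \<in> I"
  shows "gram s > 0"
proof -
  have "gram s = (x s)\<^sup>2 * ((x' s)\<^sup>2 + (z' s)\<^sup>2) + h\<^sup>2 * (x' s)\<^sup>2"
    by (simp add: gram_def power_mult_distrib algebra_simps)
  moreover have "(x s)\<^sup>2 * ((x' s)\<^sup>2 + (z' s)\<^sup>2) > 0 \<or> h\<^sup>2 * (x' s)\<^sup>2 > 0"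
    using regular[OF assms] immersed[OF assms] by (cases "x s = 0") auto
  ultimately show ?thesis
    by (smt (verit) mult_nonneg_nonneg zero_le_power2)
qed

lemma partial_derivatives:
  assumes "s \<in> I"
  shows "D_s \<Psi> s t = vector [x' s * cos t, x' s * sin t, z' s]"
    and "D_t \<Psi> s t = vector [- x s * sin t, x s * cos t, h]"
    and "D_s (D_s \<Psi>) s t = vector [x'' s * cos t, x'' s * sin t, z'' s]"
    and "D_t (D_s \<Psi>) s t = vector [- x' s * sin t, x' s * cos t, 0]"
    and "D_t (D_t \<Psi>) s t = vector [- x s * cos t, - x s * sin t, 0]"
  using D_s_helicoidal_surface[OF dx[OF assms] dz[OF assms]] D_t_helicoidal_surface
    D_s_D_s_helicoidal_surface[OF open_I assms dx dx'[OF assms] dz dz'[OF assms]]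
    D_t_D_s_helicoidal_surface[OF dx[OF assms] dz[OF assms]] D_t_D_t_helicoidal_surface
  by simp_all

lemma unit_normal_eq:
  assumes "s \<in> I"
  shows "unit_normal \<Psi> s t = (1 / sqrt (gram s)) *\<^sub>R normal s t"
proof -
  have "cross3 (D_s \<Psi> s t) (D_t \<Psi> s t) = normal s t"
    unfolding partial_derivatives[OF assms] normal_def cross3_def
    by (simp add: vec_eq_iff forall_3; use sin_cos_squared_add[of t] in algebra)
  moreover have "norm (normal s t) = sqrt (gram s)"
    unfolding norm_eq_sqrt_inner normal_def gram_def
    by (simp add: inner_vec_def sum_3; use sin_cos_squared_add[of t] in algebra)
  ultimately show ?thesis
    by (simp add: unit_normal_def)
qed

lemma mean_curvature_eq:
  assumes s: "s \<in> I"
  shows "mean_curvature \<Psi> s t = H s"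
proof -
  note d = partial_derivatives[OF s] and trig = sin_cos_squared_add[of t]
  have E: "D_s \<Psi> s t \<bullet> D_s \<Psi> s t = (x' s)\<^sup>2 + (z' s)\<^sup>2"
    unfolding d by (simp add: inner_vec_def sum_3; use trig in algebra)
  have F: "D_s \<Psi> s t \<bullet> D_t \<Psi> s t = h * z' s"
    unfolding d by (simp add: inner_vec_def sum_3; use trig in algebra)
  have G: "D_t \<Psi> s t \<bullet> D_t \<Psi> s t = (x s)\<^sup>2 + h\<^sup>2"
    unfolding d by (simp add: inner_vec_def sum_3; use trig in algebra)
  have l: "D_s (D_s \<Psi>) s t \<bullet> normal s t = x s * (x' s * z'' s - x'' s * z' s)"
    unfolding d normal_def by (simp add: inner_vec_def sum_3; use trig in algebra)
  have m: "D_t (D_s \<Psi>) s t \<bullet> normal s t = - h * (x' s)\<^sup>2"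
    unfolding d normal_def by (simp add: inner_vec_def sum_3; use trig in algebra)
  have n: "D_t (D_t \<Psi>) s t \<bullet> normal s t = (x s)\<^sup>2 * z' s"
    unfolding d normal_def by (simp add: inner_vec_def sum_3; use trig in algebra)
  have EG_F: "((x' s)\<^sup>2 + (z' s)\<^sup>2) * ((x s)\<^sup>2 + h\<^sup>2) - (h * z' s)\<^sup>2 = gram s"
    unfolding gram_def by algebra
  show ?thesis
    unfolding mean_curvature_def Let_def unit_normal_eq[OF s] inner_scaleR_right E F G l m n EG_F
    using gram_pos[OF s] by (simp add: H_def field_simps power2_eq_square)
qed

lemma cylinder_profile:
  assumes x'_zero: "\<forall>s\<in>I. x' s = 0" and s: "s \<in> I"
  shows "x s \<noteq> 0" and "z' s \<noteq> 0" and "H s * sqrt (gram s) = z' s"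
proof -
  have x''_zero: "x'' s = 0"
    using DERIV_zero_if_constant_on_open[OF dx'[OF s] open_I s] x'_zero by blast
  show x: "x s \<noteq> 0"
    using immersed[OF s] x'_zero s by auto
  show z': "z' s \<noteq> 0"
    using regular[OF s] x'_zero s by auto
  have "sqrt (gram s) = \<bar>x s * z' s\<bar>"
    by (simp add: gram_def x'_zero s)
  then show "H s * sqrt (gram s) = z' s"
    using x z' by (simp add: H_def gram_def x'_zero s x''_zero power2_eq_square field_simps)
qed

end

locale helicoidal_singular_minimal = helicoidal_profile +
  fixes \<alpha> :: real and v :: "real^3" and J :: "real set"
  assumes h_nonzero: "h \<noteq> 0" and alpha_nonzero: "\<alpha> \<noteq> 0" and unit_v: "norm v = 1"
    and interval_I: "is_interval I" and I_nonempty: "I \<noteq> {}"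
    and open_J: "open J" and J_nonempty: "J \<noteq> {}"
    and halfspace: "\<And>s t. s \<in> I \<Longrightarrow> t \<in> J \<Longrightarrow> helicoidal_surface h x z s t \<bullet> v > 0"
    and singular_minimal: "\<And>s t. s \<in> I \<Longrightarrow> t \<in> J \<Longrightarrow>
          mean_curvature (helicoidal_surface h x z) s t =
          \<alpha> * (unit_normal (helicoidal_surface h x z) s t \<bullet> v) / (helicoidal_surface h x z s t \<bullet> v)"
begin

lemma singular_minimal_eq:
  assumes s: "s \<in> I" and t: "t \<in> J"
  shows "H s * sqrt (gram s) * (\<Psi> s t \<bullet> v) = \<alpha> * (normal s t \<bullet> v)"
proof -
  have "H s = \<alpha> * (normal s t \<bullet> v) / sqrt (gram s) / (\<Psi> s t \<bullet> v)"
    using singular_minimal[OF s t] by (simp add: mean_curvature_eq[OF s] unit_normal_eq[OF s])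
  then show ?thesis
    using halfspace[OF s t] gram_pos[OF s] by (simp add: field_simps)
qed

lemma singular_minimal_coefficients:
  assumes s: "s \<in> I"
  shows "H s * sqrt (gram s) * z s * v$3 = \<alpha> * x s * x' s * v$3"
    and "H s * sqrt (gram s) * h * v$3 = 0"
    and "H s * sqrt (gram s) * x s * v$1 + \<alpha> * (x s * z' s * v$1 + h * x' s * v$2) = 0"
    and "H s * sqrt (gram s) * x s * v$2 + \<alpha> * (x s * z' s * v$2 - h * x' s * v$1) = 0"
proof -
  let ?k = "H s * sqrt (gram s)"
  have "(?k * z s * v$3 - \<alpha> * x s * x' s * v$3) + (?k * h * v$3) * t
      + (?k * x s * v$1 + \<alpha> * (x s * z' s * v$1 + h * x' s * v$2)) * cos t
      + (?k * x s * v$2 + \<alpha> * (x s * z' s * v$2 - h * x' s * v$1)) * sin t = 0"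
    if t: "t \<in> J" for t
    using singular_minimal_eq[OF s t]
    unfolding helicoidal_surface_eq normal_def by (simp add: inner_vec_def sum_3 algebra_simps)
  from affine_cos_sin_zero_on_open_imp_coeffs_zero[OF open_J J_nonempty this]
  show "?k * z s * v$3 = \<alpha> * x s * x' s * v$3"
    and "?k * h * v$3 = 0"
    and "?k * x s * v$1 + \<alpha> * (x s * z' s * v$1 + h * x' s * v$2) = 0"
    and "?k * x s * v$2 + \<alpha> * (x s * z' s * v$2 - h * x' s * v$1) = 0"
    by simp_all
qed

lemma v_orthogonal_to_axis: "v$3 = 0"
proof (rule ccontr)
  assume v3: "v$3 \<noteq> 0"
  have k_zero: "H s * sqrt (gram s) = 0" if "s \<in> I" for s
    using singular_minimal_coefficients(2)[OF that] h_nonzero v3 by simp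
  have "x s * x' s = 0" if "s \<in> I" for s
    using singular_minimal_coefficients(1)[OF that] k_zero[OF that] alpha_nonzero v3 by simp
  then have x'_zero: "\<forall>s\<in>I. x' s = 0"
    using DERIV_zero_if_self_times_DERIV_zero[OF open_I interval_I dx] by blast
  obtain s where s: "s \<in> I"
    using I_nonempty by blast
  show False
    using cylinder_profile(2,3)[OF x'_zero s] k_zero[OF s] by simp
qed

lemma v_horizontal_norm: "(v$1)\<^sup>2 + (v$2)\<^sup>2 = 1"
proof -
  have "v \<bullet> v = 1"
    using unit_v by (simp flip: power2_norm_eq_inner)
  then show ?thesis
    using v_orthogonal_to_axis by (simp add: inner_vec_def sum_3 power2_eq_square)
qed

lemma profile_derivative_zero: "\<forall>s\<in>I. x' s = 0"
proof
  fix s assume s: "s \<in> I"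
  note coeffs = singular_minimal_coefficients[OF s]
  have "\<alpha> * h * x' s = ((v$1)\<^sup>2 + (v$2)\<^sup>2) * (\<alpha> * h * x' s)"
    by (simp add: v_horizontal_norm)
  also have "\<dots> = v$2 * (H s * sqrt (gram s) * x s * v$1 + \<alpha> * (x s * z' s * v$1 + h * x' s * v$2))
      - v$1 * (H s * sqrt (gram s) * x s * v$2 + \<alpha> * (x s * z' s * v$2 - h * x' s * v$1))"
    by algebra
  also have "\<dots> = 0"
    by (simp only: coeffs(3,4))
  finally show "x' s = 0"
    using alpha_nonzero h_nonzero by simp
qed

lemma alpha_eq_minus_one: "\<alpha> = -1"
proof -
  obtain s where s: "s \<in> I"
    using I_nonempty by blast
  note cylinder = cylinder_profile[OF profile_derivative_zero s]
  have "x s * z' s * (1 + \<alpha>) = ((v$1)\<^sup>2 + (v$2)\<^sup>2) * (H s * sqrt (gram s) * x s + \<alpha> * x s * z' s)"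
    unfolding v_horizontal_norm cylinder(3) by (simp add: algebra_simps)
  also have "\<dots> = v$1 * (H s * sqrt (gram s) * x s * v$1 + \<alpha> * (x s * z' s * v$1 + h * x' s * v$2))
      + v$2 * (H s * sqrt (gram s) * x s * v$2 + \<alpha> * (x s * z' s * v$2 - h * x' s * v$1))"
    by algebra
  also have "\<dots> = 0"
    by (simp only: singular_minimal_coefficients(3,4)[OF s])
  finally show ?thesis
    using cylinder(1,2) by simp
qed

lemma profile_radius_constant: "\<exists>r>0. \<forall>s\<in>I. (x s)\<^sup>2 = r\<^sup>2"
proof -
  have "\<exists>c. \<forall>s\<in>I. x s = c"
  proof (rule has_field_derivative_zero_constant)
    show "convex I"
      using interval_I by (simp add: is_interval_convex)
    fix s assume "s \<in> I"
    then show "(x has_real_derivative 0) (at s within I)"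
      using dx profile_derivative_zero by (metis has_field_derivative_at_within)
  qed
  then obtain c where c: "\<forall>s\<in>I. x s = c"
    by blast
  obtain s where s: "s \<in> I"
    using I_nonempty by blast
  have "c \<noteq> 0"
    using cylinder_profile(1)[OF profile_derivative_zero s] c s by simp
  then show ?thesis
    using c by (intro exI[of _ "\<bar>c\<bar>"]) simp
qed

end
theorem theorem1:
  fixes h \<alpha> :: real and v :: "real^3"
    and x x' x'' z z' z'' :: "real \<Rightarrow> real"
    and I J :: "real set"
  assumes h: "h \<noteq> 0"
    and alpha: "\<alpha> \<noteq> 0"
    and v: "norm v = 1"
    and I: "open I" "is_interval I" "I \<noteq> {}"
    and J: "open J" "is_interval J" "J \<noteq> {}"
    and dx: "\<And>s. s \<in> I \<Longrightarrow> (x has_real_derivative x' s) (at s)"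
    and dx': "\<And>s. s \<in> I \<Longrightarrow> (x' has_real_derivative x'' s) (at s)"
    and dz: "\<And>s. s \<in> I \<Longrightarrow> (z has_real_derivative z' s) (at s)"
    and dz': "\<And>s. s \<in> I \<Longrightarrow> (z' has_real_derivative z'' s) (at s)"
    and regular: "\<And>s. s \<in> I \<Longrightarrow> (x' s)\<^sup>2 + (z' s)\<^sup>2 > 0"
    and immersed: "\<And>s. s \<in> I \<Longrightarrow> (x s)\<^sup>2 + h\<^sup>2 * (x' s)\<^sup>2 > 0"
    and halfspace: "\<And>s t. s \<in> I \<Longrightarrow> t \<in> J \<Longrightarrow> helicoidal_surface h x z s t \<bullet> v > 0"
    and singular_minimal: "\<And>s t. s \<in> I \<Longrightarrow> t \<in> J \<Longrightarrow>
          mean_curvature (helicoidal_surface h x z) s t =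
          \<alpha> * (unit_normal (helicoidal_surface h x z) s t \<bullet> v) / (helicoidal_surface h x z s t \<bullet> v)"
  shows "(\<forall>c::real. vector [0, 0, c] \<bullet> v = 0) \<and> \<alpha> = -1 \<and>
         (\<exists>r>0. \<forall>s\<in>I. \<forall>t\<in>J.
            (helicoidal_surface h x z s t $ 1)\<^sup>2 + (helicoidal_surface h x z s t $ 2)\<^sup>2 = r\<^sup>2)"
proof -
  interpret helicoidal_singular_minimal h x x' x'' z z' z'' I \<alpha> v J
    using assms by unfold_locales auto
  obtain r where "r > 0" and radius: "\<forall>s\<in>I. (x s)\<^sup>2 = r\<^sup>2"
    using profile_radius_constant by blast
  have "\<forall>c::real. vector [0, 0, c] \<bullet> v = 0"
    using v_orthogonal_to_axis by (simp add: inner_vec_def sum_3)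
  moreover have "\<forall>s\<in>I. \<forall>t\<in>J.
      (helicoidal_surface h x z s t $ 1)\<^sup>2 + (helicoidal_surface h x z s t $ 2)\<^sup>2 = r\<^sup>2"
    using radius by (simp add: helicoidal_surface_distance_to_axis)
  ultimately show ?thesis
    using alpha_eq_minus_one \<open>r > 0\<close> by blast
qed

end
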